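(* Under the rank assumptions stated in the context, let $S_{j}:=\{y+s v_j: y\in \mathrm{relint}(F_{j}), s> 0\}$. Then $S_{j}$ and $S_{k}$ are disjoint for any $j\neq k$.
   Context: Let $d\geq 3$, let $v_1,\dots,v_d\in\mathbb{R}^d$ be distinct unit vectors and $b_1,\dots,b_d$ real numbers, and let $A=\{x\in \mathbb{R}^d:\ x\cdot v_j\leq b_j\ \text{for}\ j=1,\dots, d\}$ be a (possibly unbounded) convex polytope. For each $j$, $F_j$ denotes the (possible) facet of $A$ corresponding to $v_j$ (the part of $A$ on the hyperplane $\{x: x\cdot v_j=b_j\}$), and $\mathrm{relint}$ denotes relative interior. The following rank assumptions are imposed: for any $1\leq j<k\leq d$, if $\operatorname{rank} \begin{bmatrix} v_j & v_k \end{bmatrix}<2$, then $\operatorname{rank} \begin{bmatrix} v_j & v_k\end{bmatrix}<\operatorname{rank} \begin{bmatrix} v_j & v_k\\ b_j&b_k \end{bmatrix}$; for any $1\leq j<k<l\leq d$, if $\operatorname{rank} \begin{bmatrix} v_j & v_k & v_l\end{bmatrix}<3$, then $\operatorname{rank} \begin{bmatrix} v_j & v_k & v_l\end{bmatrix}<\operatorname{rank} \begin{bmatrix} v_j & v_k & v_l\\ b_j&b_k&b_l \end{bmatrix}$; for any $1\leq j<k<l<s\leq d$, if $\operatorname{rank} \begin{bmatrix} v_j & v_k & v_l& v_s\end{bmatrix}<4$, then $\operatorname{rank} \begin{bmatrix} v_j & v_k & v_l& v_s\end{bmatrix}<\operatorname{rank} \begin{bmatrix} v_j & v_k & v_l&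 v_s\\ b_j&b_k&b_l&b_s \end{bmatrix}$. *)

theory Defs
  imports "HOL-Analysis.Analysis"
begin

text \<open>Vectors in R^d are modelled as real^'n with d = CARD('n); the d constraints are
indexed by j in {1..d}.\<close>

definition polyA :: "(nat \<Rightarrow> real^'n) \<Rightarrow> (nat \<Rightarrow> real) \<Rightarrow> (real^'n) set" where
  "polyA v b = {x. \<forall>j\<in>{1..CARD('n)}. x \<bullet> v j \<le> b j}"

definition facetF :: "(nat \<Rightarrow> real^'n) \<Rightarrow> (nat \<Rightarrow> real) \<Rightarrow> nat \<Rightarrow> (real^'n) set" where
  "facetF v b j = polyA v b \<inter> {x. x \<bullet> v j = b j}"

definition setS :: "(nat \<Rightarrow> real^'n) \<Rightarrow> (nat \<Rightarrow> real) \<Rightarrow> nat \<Rightarrow> (real^'n) set" where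
  "setS v b j = {y + s *\<^sub>R v j | y s. y \<in> rel_interior (facetF v b j) \<and> s > 0}"

text \<open>Rank of a matrix = dimension of the span of its columns.
The augmented column of index j is (v j, b j).\<close>

definition colrank :: "(nat \<Rightarrow> real^'n) \<Rightarrow> nat set \<Rightarrow> nat" where
  "colrank v J = dim (v ` J)"

definition augrank :: "(nat \<Rightarrow> real^'n) \<Rightarrow> (nat \<Rightarrow> real) \<Rightarrow> nat set \<Rightarrow> nat" where
  "augrank v b J = dim ((\<lambda>j. (v j, b j)) ` J)"

end

theory Submission
  imports Defs
begin

text \<open>A point \<open>y + s v\<^sub>j\<close> with \<open>y \<in> F\<^sub>j\<close> and \<open>s \<ge> 0\<close> has \<open>y\<close> as its nearest point in \<open>A\<close>,
  because \<open>v\<^sub>j\<close> is an outer normal of \<open>A\<close> at \<open>y\<close>. Hence a common point of \<open>S\<^sub>j\<close> and \<open>S\<^sub>k\<close>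
  determines the same foot \<open>y\<close>, so \<open>s v\<^sub>j = t v\<^sub>k\<close>, and as both are unit vectors \<open>v\<^sub>j = v\<^sub>k\<close>.\<close>

lemma normal_rays_meet_imp_eq:
  fixes y y' u w :: "'a::real_inner"
  assumes meet: "y + s *\<^sub>R u = y' + t *\<^sub>R w"
    and "s \<ge> 0" "t \<ge> 0"
    and "y' \<bullet> u \<le> y \<bullet> u" and "y \<bullet> w \<le> y' \<bullet> w"
  shows "y = y'"
proof -
  have "y - y' = t *\<^sub>R w - s *\<^sub>R u"
    using meet by (simp add: algebra_simps)
  then have "(y - y') \<bullet> (y - y') = t * ((y - y') \<bullet> w) - s * ((y - y') \<bullet> u)"
    by (simp add: inner_diff_right)
  also have "\<dots> \<le> 0"
  proof -
    have "t * ((y - y') \<bullet> w) \<le> 0" "0 \<le> s * ((y - y') \<bullet> u)"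
      using assms by (simp_all add: inner_diff_left mult_nonneg_nonpos)
    then show ?thesis
      by linarith
  qed
  finally show ?thesis
    by (metis inner_gt_zero_iff not_le right_minus_eq)
qed

lemma scaleR_unit_vectors_eq:
  fixes u w :: "'a::real_normed_vector"
  assumes "norm u = 1" "norm w = 1" "s > 0" "t > 0" "s *\<^sub>R u = t *\<^sub>R w"
  shows "u = w"
proof -
  have "s = norm (s *\<^sub>R u)"
    using assms(1,3) by simp
  also have "\<dots> = norm (t *\<^sub>R w)"
    using assms(5) by simp
  also have "\<dots> = t"
    using assms(2,4) by simp
  finally have "s = t" .
  then show ?thesis
    using assms by simp
qed

lemma facetF_inner_maximal:
  fixes v :: "nat \<Rightarrow> real^'n"
  assumes "y \<in> facetF v b j" "x \<in> polyA v b" "j \<in> {1..CARD('n)}"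
  shows "x \<bullet> v j \<le> y \<bullet> v j"
proof -
  have "x \<bullet> v j \<le> b j"
    using assms(2,3) unfolding polyA_def by blast
  moreover have "y \<bullet> v j = b j"
    using assms(1) unfolding facetF_def by blast
  ultimately show ?thesis
    by simp
qed

lemma facetF_subset_polyA: "facetF v b j \<subseteq> polyA v b"
  unfolding facetF_def by blast

theorem lemma6p2:
  fixes v :: "nat \<Rightarrow> real^'n" and b :: "nat \<Rightarrow> real" and j k :: nat
  assumes d3: "CARD('n) \<ge> 3"
    and unit: "\<forall>i\<in>{1..CARD('n)}. norm (v i) = 1"
    and distinct: "inj_on v {1..CARD('n)}"
    and rank2: "\<forall>j1 k1. 1 \<le> j1 \<and> j1 < k1 \<and> k1 \<le> CARD('n) \<longrightarrow>
        colrank v {j1, k1} < 2 \<longrightarrow> colrank v {j1, k1} < augrank v b {j1, k1}"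
    and rank3: "\<forall>j1 k1 l1. 1 \<le> j1 \<and> j1 < k1 \<and> k1 < l1 \<and> l1 \<le> CARD('n) \<longrightarrow>
        colrank v {j1, k1, l1} < 3 \<longrightarrow> colrank v {j1, k1, l1} < augrank v b {j1, k1, l1}"
    and rank4: "\<forall>j1 k1 l1 s1. 1 \<le> j1 \<and> j1 < k1 \<and> k1 < l1 \<and> l1 < s1 \<and> s1 \<le> CARD('n) \<longrightarrow>
        colrank v {j1, k1, l1, s1} < 4 \<longrightarrow>
        colrank v {j1, k1, l1, s1} < augrank v b {j1, k1, l1, s1}"
    and j: "j \<in> {1..CARD('n)}" and k: "k \<in> {1..CARD('n)}" and jk: "j \<noteq> k"
  shows "setS v b j \<inter> setS v b k = {}"
proof (rule ccontr)
  assume "setS v b j \<inter> setS v b k \<noteq> {}"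
  then obtain y s y' t where "y \<in> rel_interior (facetF v b j)" "s > 0"
    and "y' \<in> rel_interior (facetF v b k)" "t > 0"
    and meet: "y + s *\<^sub>R v j = y' + t *\<^sub>R v k"
    unfolding setS_def by blast
  then have y: "y \<in> facetF v b j" and y': "y' \<in> facetF v b k"
    using rel_interior_subset by blast+
  have "y = y'"
    using normal_rays_meet_imp_eq[OF meet] \<open>s > 0\<close> \<open>t > 0\<close>
      facetF_inner_maximal[OF y _ j] facetF_inner_maximal[OF y' _ k]
      y y' facetF_subset_polyA by (meson less_imp_le subsetD)
  with meet have "s *\<^sub>R v j = t *\<^sub>R v k"
    by simp
  then have "v j = v k"
    using scaleR_unit_vectors_eq unit j k \<open>s > 0\<close> \<open>t > 0\<close> by blast
  with distinct j k jk show False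
    by (meson inj_onD)
qed

end
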